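(* For every $d\in\mathbb{N}$, the number of unlabeled $n$-vertex graphs in $\mathcal{X}_d$ is at least $n^{\frac{(d-2)n}{2}(1-o(1))}$ (as $n\to\infty$).
   Context: For a graph $G$, $s_k(G)$ is the number of unlabeled (isomorphism classes of) $k$-vertex subgraphs. An $n$-vertex graph $G$ is monotone $(c,\mathcal{Y},t)$-tiny if (1) for every integer $1\le k\le t(n)$ every $k$-vertex subgraph of $G$ is in $\mathcal{Y}$, and (2) for every integer $t(n)<k\le n$, $s_k(G)\le c^k$. $\mathcal{S}_d$ is the class of all graphs $G$ such that for every integer $k$ with $1000^{10(d+1)}\le k\le|V(G)|$, every $k$-vertex subgraph of $G$ has at most $k-1+k/\ln k$ edges. Let $c=c(d)$ be a constant such that, for $G_n$ uniform among graphs on $[n]$ with $\lceil d(n-1)/2\rceil$ edges, $\Pr[G_n$ is not monotone $(c,\mathcal{S}_d,\ln^2)$-tiny$]<200\sqrt{d/n}$ for all $n$ (such $c$ exists). Then $\mathcal{X}_d$ is the class of monotone $(c,\mathcal{S}_d,\ln^2)$-tiny unlabeled graphs $G$ having exactly $\lceil d(|V(G)|-1)/2\rceil$ edges, where $\ln^2(n)=(\ln n)^2$. *)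

theory Defs
  imports Complex_Main
begin

type_synonym graph = "nat set \<times> nat set set"

definition graph_on :: "nat set \<Rightarrow> nat set set \<Rightarrow> bool" where
  "graph_on V E \<longleftrightarrow> finite V \<and> E \<subseteq> {e. \<exists>x y. x \<noteq> y \<and> x \<in> V \<and> y \<in> V \<and> e = {x, y}}"

definition is_graph :: "graph \<Rightarrow> bool" where
  "is_graph G \<longleftrightarrow> graph_on (fst G) (snd G)"

definition nverts :: "graph \<Rightarrow> nat" where
  "nverts G = card (fst G)"

definition nedges :: "graph \<Rightarrow> nat" where
  "nedges G = card (snd G)"

definition graph_iso :: "graph \<Rightarrow> graph \<Rightarrow> bool" where
  "graph_iso G H \<longleftrightarrow> (\<exists>f. bij_betw f (fst G) (fst H) \<and>
      (\<forall>x\<in>fst G. \<forall>y\<in>fst G. {x, y} \<in> snd G \<longleftrightarrow> {f x, f y} \<in> snd H))"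

definition iso_rel :: "(graph \<times> graph) set" where
  "iso_rel = {(G, H). graph_iso G H}"

definition num_unlabeled :: "graph set \<Rightarrow> nat" where
  "num_unlabeled A = card (A // iso_rel)"

text \<open>All (not necessarily induced) k-vertex subgraphs of G.\<close>
definition subgraphs :: "nat \<Rightarrow> graph \<Rightarrow> graph set" where
  "subgraphs k G = {(W, F). W \<subseteq> fst G \<and> card W = k \<and> F \<subseteq> snd G \<and> graph_on W F}"

definition s_k :: "nat \<Rightarrow> graph \<Rightarrow> nat" where
  "s_k k G = num_unlabeled (subgraphs k G)"

definition monotone_tiny :: "real \<Rightarrow> (graph \<Rightarrow> bool) \<Rightarrow> (nat \<Rightarrow> real) \<Rightarrow> graph \<Rightarrow> bool" where
  "monotone_tiny c Y t G \<longleftrightarrow>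
     (\<forall>k::nat. 1 \<le> k \<and> real k \<le> t (nverts G) \<longrightarrow> (\<forall>H\<in>subgraphs k G. Y H)) \<and>
     (\<forall>k::nat. t (nverts G) < real k \<and> k \<le> nverts G \<longrightarrow> real (s_k k G) \<le> c ^ k)"

definition S_class :: "nat \<Rightarrow> graph \<Rightarrow> bool" where
  "S_class d G \<longleftrightarrow> (\<forall>k::nat. (1000::nat) ^ (10 * (d + 1)) \<le> k \<and> k \<le> nverts G \<longrightarrow>
      (\<forall>H\<in>subgraphs k G. real (nedges H) \<le> real k - 1 + real k / ln (real k)))"

definition ln2 :: "nat \<Rightarrow> real" where
  "ln2 n = (ln (real n))\<^sup>2"

definition edge_target :: "nat \<Rightarrow> nat \<Rightarrow> nat" where
  "edge_target d n = nat \<lceil>real d * (real n - 1) / 2\<rceil>"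

text \<open>Labeled graphs on vertex set [n] (represented as {0..<n}) with m edges.\<close>
definition labeled_graphs :: "nat \<Rightarrow> nat \<Rightarrow> graph set" where
  "labeled_graphs n m = {G. fst G = {0..<n} \<and> is_graph G \<and> nedges G = m}"

definition prob_not_tiny :: "real \<Rightarrow> nat \<Rightarrow> nat \<Rightarrow> real" where
  "prob_not_tiny c d n =
     real (card {G \<in> labeled_graphs n (edge_target d n). \<not> monotone_tiny c (S_class d) ln2 G})
     / real (card (labeled_graphs n (edge_target d n)))"

definition good_constant :: "nat \<Rightarrow> real \<Rightarrow> bool" where
  "good_constant d c \<longleftrightarrow> (\<forall>n::nat. n \<ge> 1 \<longrightarrow> prob_not_tiny c d n < 200 * sqrt (real d / real n))"

definition X_class :: "nat \<Rightarrow> real \<Rightarrow> graph \<Rightarrow> bool" where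
  "X_class d c G \<longleftrightarrow> is_graph G \<and> monotone_tiny c (S_class d) ln2 G \<and>
      nedges G = edge_target d (nverts G)"

definition count_X :: "nat \<Rightarrow> real \<Rightarrow> nat \<Rightarrow> nat" where
  "count_X d c n = num_unlabeled {G. fst G = {0..<n} \<and> X_class d c G}"

end

theory Submission
  imports Defs "HOL-Combinatorics.Permutations" "HOL-Real_Asymp.Real_Asymp"
begin

text \<open>For \<open>n \<ge> 160000 d\<close> the choice of \<open>c\<close> makes at least half of the labeled graphs on
  \<open>{0..<n}\<close> with \<open>m = \<lceil>d(n-1)/2\<rceil>\<close> edges monotone tiny, and these are exactly the graphs of
  \<open>\<X>\<^sub>d\<close> on \<open>{0..<n}\<close>. An isomorphism class contains at most \<open>n!\<close> graphs on a fixed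
  \<open>n\<close>-set, so with \<open>N = n choose 2\<close> the count is at least \<open>(N choose m) / (2 n!)\<close>.
  Since \<open>N / m \<ge> n / (2d)\<close>, \<open>(N choose m) \<ge> (n / (2d))\<^sup>m\<close>, and with \<open>n! \<le> n\<^sup>n\<close> the
  logarithm of the count is \<open>(d/2 - 1) n ln n\<close> up to a relative error \<open>O(1 / ln n)\<close>.\<close>

lemma finite_graphs_on:
  assumes "finite V"
  shows "finite {G. fst G = V \<and> is_graph G}"
proof (rule finite_subset)
  show "{G. fst G = V \<and> is_graph G} \<subseteq> {V} \<times> Pow (Pow V)"
    by (auto simp: is_graph_def graph_on_def)
qed (use assms in auto)

lemma graph_iso_imp_edges_image:
  assumes "graph_iso G H" "is_graph G" "is_graph H"
  obtains f where "bij_betw f (fst G) (fst H)" "snd H = (\<lambda>e. f ` e) ` snd G"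
proof -
  obtain f where f: "bij_betw f (fst G) (fst H)"
    and edge: "\<And>x y. x \<in> fst G \<Longrightarrow> y \<in> fst G \<Longrightarrow> {x, y} \<in> snd G \<longleftrightarrow> {f x, f y} \<in> snd H"
    using assms(1) unfolding graph_iso_def by blast
  have "snd H \<subseteq> (\<lambda>e. f ` e) ` snd G"
  proof
    fix e assume "e \<in> snd H"
    then obtain a b where ab: "a \<in> fst H" "b \<in> fst H" "e = {a, b}"
      using assms(3) unfolding is_graph_def graph_on_def by blast
    then obtain x y where xy: "x \<in> fst G" "y \<in> fst G" "a = f x" "b = f y"
      using f unfolding bij_betw_def by blast
    with edge \<open>e \<in> snd H\<close> ab(3) have "{x, y} \<in> snd G"
      by simp
    moreover have "e = f ` {x, y}"
      using ab(3) xy by simp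
    ultimately show "e \<in> (\<lambda>e. f ` e) ` snd G"
      by blast
  qed
  moreover have "(\<lambda>e. f ` e) ` snd G \<subseteq> snd H"
  proof
    fix e' assume "e' \<in> (\<lambda>e. f ` e) ` snd G"
    then obtain e where e: "e \<in> snd G" "e' = f ` e"
      by blast
    then obtain x y where "x \<in> fst G" "y \<in> fst G" "e = {x, y}"
      using assms(2) unfolding is_graph_def graph_on_def by blast
    with edge e show "e' \<in> snd H"
      by simp
  qed
  ultimately show thesis
    using that f by blast
qed

lemma card_iso_class_le_fact:
  assumes "finite V" "fst G = V" "is_graph G"
  shows "card {H. fst H = V \<and> is_graph H \<and> graph_iso G H} \<le> fact (card V)"
proof -
  let ?relabel = "\<lambda>p. (V, (\<lambda>e. p ` e) ` snd G)"
  have "{H. fst H = V \<and> is_graph H \<and> graph_iso G H} \<subseteq> ?relabel ` {p. p permutes V}"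
  proof
    fix H assume H: "H \<in> {H. fst H = V \<and> is_graph H \<and> graph_iso G H}"
    then obtain f where f: "bij_betw f V V" and edges: "snd H = (\<lambda>e. f ` e) ` snd G"
      using graph_iso_imp_edges_image[of G H] assms by auto
    have "\<And>e. e \<in> snd G \<Longrightarrow> restrict_id f V ` e = f ` e"
      using assms(2,3) unfolding is_graph_def graph_on_def by auto
    then have "snd H = (\<lambda>e. restrict_id f V ` e) ` snd G"
      unfolding edges by (rule image_cong[OF refl, symmetric])
    then have "H = ?relabel (restrict_id f V)"
      using H by (simp add: prod_eq_iff)
    then show "H \<in> ?relabel ` {p. p permutes V}"
      using permutes_restrict_id[OF f] by blast
  qed
  then have "card {H. fst H = V \<and> is_graph H \<and> graph_iso G H} \<le> card (?relabel ` {p. p permutes V})"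
    by (intro card_mono finite_imageI) (simp_all add: finite_permutations assms)
  also have "\<dots> \<le> card {p. p permutes V}"
    by (intro card_image_le) (simp add: finite_permutations assms)
  also have "\<dots> = fact (card V)"
    by (rule card_permutations[OF refl assms(1)])
  finally show ?thesis .
qed

lemma card_le_num_unlabeled_mult_fact:
  assumes "finite V" "\<And>G. G \<in> A \<Longrightarrow> fst G = V \<and> is_graph G"
  shows "card A \<le> num_unlabeled A * fact (card V)"
proof -
  have "A \<subseteq> {G. fst G = V \<and> is_graph G}"
    using assms(2) by blast
  then have finA: "finite A"
    using finite_graphs_on[OF assms(1)] by (rule finite_subset)
  have finQ: "finite (A // iso_rel)"
    unfolding quotient_def using finA by simp
  have "graph_iso G G" for G
    unfolding graph_iso_def by (rule exI[of _ id]) simp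
  then have "A \<subseteq> (\<Union>C\<in>A // iso_rel. A \<inter> C)"
    unfolding quotient_def iso_rel_def by auto
  then have "card A \<le> card (\<Union>C\<in>A // iso_rel. A \<inter> C)"
    by (intro card_mono) (use finQ finA in auto)
  also have "\<dots> \<le> (\<Sum>C\<in>A // iso_rel. card (A \<inter> C))"
    by (rule card_UN_le[OF finQ])
  also have "\<dots> \<le> (\<Sum>C\<in>A // iso_rel. fact (card V))"
  proof (rule sum_mono)
    fix C assume "C \<in> A // iso_rel"
    then obtain G where G: "G \<in> A" "C = iso_rel `` {G}"
      unfolding quotient_def by blast
    have "A \<inter> C \<subseteq> {H. fst H = V \<and> is_graph H \<and> graph_iso G H}"
      using G assms(2) unfolding iso_rel_def by auto
    then have "card (A \<inter> C) \<le> card {H. fst H = V \<and> is_graph H \<and> graph_iso G H}"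
      by (intro card_mono finite_subset[OF _ finite_graphs_on[OF assms(1)]]) auto
    also have "\<dots> \<le> fact (card V)"
      using card_iso_class_le_fact[OF assms(1)] G assms(2) by blast
    finally show "card (A \<inter> C) \<le> fact (card V)" .
  qed
  also have "\<dots> = num_unlabeled A * fact (card V)"
    unfolding num_unlabeled_def by simp
  finally show ?thesis .
qed

lemma card_labeled_graphs: "card (labeled_graphs n m) = (n choose 2) choose m"
proof -
  define P where "P = {e. \<exists>x y. x \<noteq> y \<and> x \<in> {0..<n} \<and> y \<in> {0..<n} \<and> e = {x, y::nat}}"
  have P: "P = {e. e \<subseteq> {0..<n} \<and> card e = 2}"
  proof (intro set_eqI iffI)
    fix e assume "e \<in> {e. e \<subseteq> {0..<n} \<and> card e = 2}"
    then obtain x y where "e = {x, y}" "x \<noteq> y" "e \<subseteq> {0..<n}"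
      unfolding card_2_iff by blast
    then show "e \<in> P"
      unfolding P_def by auto
  qed (auto simp: P_def)
  have "labeled_graphs n m = (\<lambda>E. ({0..<n}, E)) ` {E. E \<subseteq> P \<and> card E = m}"
    unfolding labeled_graphs_def is_graph_def graph_on_def nedges_def P_def
    by (auto simp: image_def)
  then have "card (labeled_graphs n m) = card {E. E \<subseteq> P \<and> card E = m}"
    by (simp add: card_image inj_on_def)
  also have "\<dots> = card P choose m"
    by (rule n_subsets) (simp add: P)
  also have "card P = n choose 2"
    unfolding P by (subst n_subsets) auto
  finally show ?thesis .
qed

lemma card_tiny_labeled_graphs_ge_half:
  assumes "good_constant d c" "1 \<le> n" "160000 * d \<le> n"
  defines "Lab \<equiv> labeled_graphs n (edge_target d n)"
  shows "real (card Lab) / 2 \<le> real (card {G \<in> Lab. monotone_tiny c (S_class d) ln2 G})"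
proof -
  let ?tiny = "{G \<in> Lab. monotone_tiny c (S_class d) ln2 G}"
  let ?bad = "{G \<in> Lab. \<not> monotone_tiny c (S_class d) ln2 G}"
  have "finite Lab"
    unfolding Lab_def labeled_graphs_def
    by (rule finite_subset[OF _ finite_graphs_on[of "{0..<n}"]]) auto
  then have "card (?tiny \<union> ?bad) = card ?tiny + card ?bad"
    by (intro card_Un_disjoint) auto
  moreover have "?tiny \<union> ?bad = Lab"
    by blast
  ultimately have split: "card ?tiny + card ?bad = card Lab"
    by simp
  have "sqrt (real d / real n) \<le> sqrt (1 / 400\<^sup>2)"
    using assms(2,3) by (intro real_sqrt_le_mono) (simp add: field_simps)
  also have "\<dots> = 1 / 400"
    by (simp add: real_sqrt_divide)
  finally have "prob_not_tiny c d n < 1 / 2"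
    using assms(1,2) unfolding good_constant_def by fastforce
  have "real (card ?bad) \<le> real (card Lab) / 2"
  proof (cases "Lab = {}")
    case False
    with \<open>finite Lab\<close> have "0 < card Lab"
      by (simp add: card_gt_0_iff)
    with \<open>prob_not_tiny c d n < 1 / 2\<close> show ?thesis
      unfolding prob_not_tiny_def Lab_def[symmetric] by (simp add: field_simps)
  qed simp
  with split show ?thesis
    by linarith
qed

lemma count_X_mult_fact_ge:
  assumes "good_constant d c" "1 \<le> n" "160000 * d \<le> n"
  shows "real ((n choose 2) choose edge_target d n) / 2 \<le> real (count_X d c n) * fact n"
proof -
  let ?tiny = "{G \<in> labeled_graphs n (edge_target d n). monotone_tiny c (S_class d) ln2 G}"
  have "{G. fst G = {0..<n} \<and> X_class d c G} = ?tiny"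
    unfolding X_class_def labeled_graphs_def nverts_def by auto
  then have "card ?tiny \<le> count_X d c n * fact n"
    using card_le_num_unlabeled_mult_fact[of "{0..<n}" ?tiny]
    unfolding count_X_def by (auto simp: labeled_graphs_def)
  then have "real (card ?tiny) \<le> real (count_X d c n) * fact n"
    by (metis of_nat_fact of_nat_le_iff of_nat_mult)
  with card_tiny_labeled_graphs_ge_half[OF assms] show ?thesis
    by (simp add: card_labeled_graphs)
qed

lemma real_choose_two: "real (n choose 2) = real n * (real n - 1) / 2"
  by (simp add: binomial_gbinomial gbinomial_prod_rev numeral_2_eq_2)

lemma edge_target_bounds:
  assumes "1 \<le> n"
  shows "real d * (real n - 1) / 2 \<le> real (edge_target d n)"
    and "real (edge_target d n) \<le> real d * (real n - 1) / 2 + 1"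
proof -
  have "0 \<le> real d * (real n - 1) / 2"
    using assms by simp
  then have "real (edge_target d n) = of_int \<lceil>real d * (real n - 1) / 2\<rceil>"
    unfolding edge_target_def by simp
  then show "real d * (real n - 1) / 2 \<le> real (edge_target d n)"
    and "real (edge_target d n) \<le> real d * (real n - 1) / 2 + 1"
    by linarith+
qed

lemma edge_target_le_choose_two:
  assumes "d + 3 \<le> n"
  shows "edge_target d n \<le> n choose 2"
proof -
  have "real (edge_target d n) \<le> real d * (real n - 1) / 2 + 1"
    using assms by (intro edge_target_bounds) simp
  also have "\<dots> \<le> real n * (real n - 1) / 2"
  proof -
    have "3 * 2 \<le> (real n - real d) * (real n - 1)"
      by (rule mult_mono) (use assms in auto)
    then have "real d * (real n - 1) + 2 \<le> real n * (real n - 1)"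
      by (simp add: algebra_simps)
    then show ?thesis
      by linarith
  qed
  also have "\<dots> = real (n choose 2)"
    by (rule real_choose_two[symmetric])
  finally show ?thesis
    by linarith
qed

lemma choose_two_div_edge_target_ge:
  assumes "2 \<le> d" "2 * d + 3 \<le> n"
  shows "real n / (2 * real d) \<le> real (n choose 2) / real (edge_target d n)"
proof -
  have m_lo: "real d * (real n - 1) / 2 \<le> real (edge_target d n)"
    and m_hi: "real (edge_target d n) \<le> real d * (real n - 1) / 2 + 1"
    using assms by (intro edge_target_bounds; simp)+
  have "0 < real d * (real n - 1) / 2"
    using assms by simp
  with m_lo have m_pos: "0 < real (edge_target d n)"
    by linarith
  have "real d * (real n - 1) = real d * real n - real d"
    by (simp add: algebra_simps)
  with m_hi assms(1) have "real (edge_target d n) \<le> real d * real n / 2"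
    by linarith
  then have "real n * real (edge_target d n) \<le> real n * (real d * real n / 2)"
    by (rule mult_left_mono) simp
  also have "\<dots> = (real d * real n) * (real n / 2)"
    by simp
  also have "\<dots> \<le> (real d * real n) * (real n - 1)"
    by (rule mult_left_mono) (use assms in simp_all)
  also have "\<dots> = 2 * real d * real (n choose 2)"
    by (simp add: real_choose_two)
  finally show ?thesis
    using m_pos assms(1) by (simp add: field_simps)
qed

lemma ln_choose_ge:
  assumes "0 < k" "k \<le> n"
  shows "real k * ln (real n / real k) \<le> ln (real (n choose k))"
proof -
  have pos: "0 < (real n / real k) ^ k"
    using assms by simp
  have "ln ((real n / real k) ^ k) \<le> ln (real (n choose k))"
    using binomial_ge_n_over_k_pow_k[OF assms(2)] pos assms by (subst ln_le_cancel_iff) auto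
  then show ?thesis
    using assms by (simp add: ln_realpow)
qed

lemma ln_fact_le: "ln (fact n :: real) \<le> real n * ln (real n)"
proof (cases "n = 0")
  case False
  have "(fact n :: real) \<le> real n ^ n"
    using fact_le_power[where 'a = real, of n] by simp
  then have "ln (fact n :: real) \<le> ln (real n ^ n)"
    by (subst ln_le_cancel_iff) (use False in auto)
  then show ?thesis
    using False by (simp add: ln_realpow)
qed simp

lemma count_X_pos:
  assumes "good_constant d c" "160000 * d + d + 3 \<le> n"
  shows "0 < count_X d c n"
proof -
  have "1 \<le> real ((n choose 2) choose edge_target d n)"
    using edge_target_le_choose_two[of d n] assms(2) by (simp add: Suc_leI)
  moreover have "real ((n choose 2) choose edge_target d n) / 2 \<le> real (count_X d c n) * fact n"
    using count_X_mult_fact_ge[OF assms(1)] assms(2) by simp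
  ultimately have "0 < real (count_X d c n) * fact n"
    by linarith
  then show ?thesis
    by (simp add: zero_less_mult_iff)
qed

lemma ln_count_X_ge:
  assumes "good_constant d c" "2 \<le> d" "160000 * d + 2 * d + 3 \<le> n"
  shows "real d * (real n - 1) / 2 * (ln (real n) - ln (2 * real d)) - ln 2 - real n * ln (real n)
    \<le> ln (real (count_X d c n))"
proof -
  define m where "m = edge_target d n"
  define N where "N = n choose 2"
  have m_lo: "real d * (real n - 1) / 2 \<le> real m"
    unfolding m_def using assms(3) by (intro edge_target_bounds) simp
  moreover have "0 < real d * (real n - 1) / 2"
    using assms(2,3) by simp
  ultimately have m_pos: "0 < m"
    by linarith
  have "m \<le> N"
    unfolding m_def N_def using assms(3) by (intro edge_target_le_choose_two) simp
  have ratio: "real n / (2 * real d) \<le> real N / real m"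
    unfolding m_def N_def using assms(2,3) by (intro choose_two_div_edge_target_ge) simp_all
  have "1 \<le> real n / (2 * real d)"
    using assms(2,3) by simp
  with ratio have "ln (real n / (2 * real d)) \<le> ln (real N / real m)"
    by (subst ln_le_cancel_iff) auto
  then have "ln (real n) - ln (2 * real d) \<le> ln (real N / real m)"
    using assms(2,3) by (simp add: ln_div)
  moreover have "0 \<le> ln (real n) - ln (2 * real d)"
    using assms(2,3) by simp
  ultimately have "real d * (real n - 1) / 2 * (ln (real n) - ln (2 * real d)) \<le> real m * ln (real N / real m)"
    using m_lo by (intro mult_mono) simp_all
  also have "\<dots> \<le> ln (real (N choose m))"
    using ln_choose_ge[OF m_pos \<open>m \<le> N\<close>] .
  also have "\<dots> \<le> ln (2 * (real (count_X d c n) * fact n))"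
  proof (subst ln_le_cancel_iff)
    show "0 < real (N choose m)"
      using \<open>m \<le> N\<close> by simp
    show "0 < 2 * (real (count_X d c n) * fact n)"
      using count_X_pos[OF assms(1)] assms(3) by simp
    show "real (N choose m) \<le> 2 * (real (count_X d c n) * fact n)"
      using count_X_mult_fact_ge[OF assms(1), of n] assms(3) unfolding m_def N_def by simp
  qed
  also have "\<dots> = ln 2 + ln (real (count_X d c n)) + ln (fact n)"
    using count_X_pos[OF assms(1)] assms(3) by (simp add: ln_mult)
  finally show ?thesis
    using ln_fact_le[of n] by linarith
qed

text \<open>Chosen so that \<open>(d - 2) n / 2 \<cdot> (1 - exponent_defect d n) \<cdot> ln n\<close> is the bound of
  \<open>ln_count_X_ge\<close> minus \<open>d ln (2d) / 2\<close>; it is only meaningful for \<open>d \<ge> 3\<close>.\<close>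

definition exponent_defect :: "nat \<Rightarrow> nat \<Rightarrow> real" where
  "exponent_defect d n =
     (real d / real n + real d * ln (2 * real d) / ln (real n) + 2 * ln 2 / (real n * ln (real n)))
     / (real d - 2)"

lemma exponent_defect_tendsto_zero: "exponent_defect d \<longlonglongrightarrow> 0"
proof -
  have "(\<lambda>n::nat. 1 / real n) \<longlonglongrightarrow> 0" "(\<lambda>n::nat. 1 / ln (real n)) \<longlonglongrightarrow> 0"
    "(\<lambda>n::nat. 1 / (real n * ln (real n))) \<longlonglongrightarrow> 0"
    by real_asymp+
  then have "(\<lambda>n. real d * (1 / real n) + real d * ln (2 * real d) * (1 / ln (real n))
      + 2 * ln 2 * (1 / (real n * ln (real n)))) \<longlonglongrightarrow> 0"
    by (intro tendsto_add_zero tendsto_mult_right_zero)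
  then show ?thesis
    unfolding exponent_defect_def by (intro tendsto_divide_zero) simp
qed

lemma count_X_ge_powr:
  assumes "good_constant d c" "3 \<le> d" "160000 * d + 2 * d + 3 \<le> n"
  shows "real n powr ((real d - 2) * real n / 2 * (1 - exponent_defect d n)) \<le> real (count_X d c n)"
proof -
  define X where "X = (real d - 2) * real n / 2 * (1 - exponent_defect d n)"
  have "0 < ln (real n)"
    using assms(3) by simp
  then have "X * ln (real n) = real d * (real n - 1) / 2 * (ln (real n) - ln (2 * real d))
      - ln 2 - real n * ln (real n) - real d * ln (2 * real d) / 2"
    using assms(2,3) unfolding X_def exponent_defect_def by (simp add: field_simps)
  also have "\<dots> \<le> ln (real (count_X d c n))"
  proof -
    have "0 \<le> real d * ln (2 * real d) / 2"
      using assms(2) by simp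
    with ln_count_X_ge[OF assms(1) _ assms(3)] assms(2) show ?thesis
      by linarith
  qed
  finally have "exp (X * ln (real n)) \<le> real (count_X d c n)"
    using count_X_pos[OF assms(1)] assms(3) by (subst (asm) ln_ge_iff) simp_all
  then show ?thesis
    using assms(3) unfolding X_def by (simp add: powr_def)
qed

theorem mainTheorem15:
  fixes d :: nat and c :: real
  assumes "good_constant d c"
  shows "\<exists>\<epsilon> :: nat \<Rightarrow> real. \<epsilon> \<longlonglongrightarrow> 0 \<and>
     (\<forall>\<^sub>F n in sequentially.
        real (count_X d c n) \<ge> real n powr ((real d - 2) * real n / 2 * (1 - \<epsilon> n)))"
proof (cases "3 \<le> d")
  case True
  have "\<forall>\<^sub>F n in sequentially.
      real n powr ((real d - 2) * real n / 2 * (1 - exponent_defect d n)) \<le> real (count_X d c n)"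
    using eventually_ge_at_top[of "160000 * d + 2 * d + 3"]
    by eventually_elim (rule count_X_ge_powr[OF assms True])
  with exponent_defect_tendsto_zero show ?thesis
    by blast
next
  case False
  have "\<forall>\<^sub>F n in sequentially. real n powr ((real d - 2) * real n / 2 * (1 - 0)) \<le> real (count_X d c n)"
    using eventually_ge_at_top[of "160000 * d + d + 3"]
  proof eventually_elim
    case (elim n)
    have "real n powr ((real d - 2) * real n / 2 * (1 - 0)) \<le> real n powr 0"
      using False elim by (intro powr_mono) (auto simp: mult_nonpos_nonneg)
    also have "\<dots> \<le> real (count_X d c n)"
      using count_X_pos[OF assms elim] elim by simp
    finally show ?case .
  qed
  then show ?thesis
    by (intro exI[of _ "\<lambda>_. 0"]) simp
qed

end
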